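(* Let $G=(V,E,\ell,\Phi)$ be a trackable weak model (not necessarily strongly connected). Let $T\ge 1$ and let $\pi_1,\pi_2,\pi_3:\{0,1,\dots,T\}\to V$ be walks (i.e. $(\pi_j(i),\pi_j(i+1))\in E$ for $0\le i<T$, $j=1,2,3$) such that: (1) $\ell(\pi_1(i))=\ell(\pi_2(i))=\ell(\pi_3(i))$ for all $0\le i\le T$; (2) $\pi_1(0)=\pi_1(T)=a$; (3) $\pi_2(0)=\pi_2(T)=b$ with $b\neq a$; (4) $\pi_3(0)=a$ and $\pi_3(T)=b$. Then every node $\pi_1(i)$, $0\le i\le T$, is transient. (In particular, since a trackable model with $n_G(t)$ not bounded by a constant possesses such a triple, in such a model the cycle $\pi_1$ consists only of transient nodes.)
   Context: A (single-colored) weak model $G=(V,E,\ell,\Phi)$ consists of a finite set of nodes $V$, directed edges $E\subseteq V\times V$, a finite color set $\Phi$ and a coloring $\ell:V\to\Phi$. A walk of length $t$ is a node sequence $(x_1,\dots,x_t)$ with $(x_i,x_{i+1})\in E$. For $Y_{[t]}\in\Phi^t$, $\mathcal H_G(Y_{[t]})$ is the set of walks $(x_1,\dots,x_t)$ with $\ell(x_i)=Y_i$ for all $i$, and $n_G(t)=\max_{Y_{[t]}}|\mathcal H_G(Y_{[t]})|$. $G$ is trackable if $n_G(t)=O(t^k)$ for some $k\ge0$. A node $j$ is accessible from node $i$ if there is a directed path (possibly of length zero) from $i$ to $j$. A node $i$ is recurrent if $i$ is accessible from every node $j$ that is accessible from $i$; otherwise $i$ is transient. It is known (from prior work) that for a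 trackable model either $n_G(t)=O(1)$ or there exist walks $\pi_1,\pi_2,\pi_3$ as in the statement. *)

theory Defs
  imports Main "HOL-Library.Landau_Symbols"
begin

definition weak_model :: "'v set \<Rightarrow> ('v \<times> 'v) set \<Rightarrow> ('v \<Rightarrow> 'c) \<Rightarrow> 'c set \<Rightarrow> bool" where
  "weak_model V E l Phi \<longleftrightarrow> finite V \<and> E \<subseteq> V \<times> V \<and> finite Phi \<and> l ` V \<subseteq> Phi"

definition is_walk :: "'v set \<Rightarrow> ('v \<times> 'v) set \<Rightarrow> 'v list \<Rightarrow> bool" where
  "is_walk V E xs \<longleftrightarrow> set xs \<subseteq> V \<and> (\<forall>i. Suc i < length xs \<longrightarrow> (xs ! i, xs ! Suc i) \<in> E)"

definition hyp_set :: "'v set \<Rightarrow> ('v \<times> 'v) set \<Rightarrow> ('v \<Rightarrow> 'c) \<Rightarrow> 'c list \<Rightarrow> 'v list set" where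
  "hyp_set V E l Y = {xs. length xs = length Y \<and> is_walk V E xs \<and> map l xs = Y}"

definition n_G :: "'v set \<Rightarrow> ('v \<times> 'v) set \<Rightarrow> ('v \<Rightarrow> 'c) \<Rightarrow> 'c set \<Rightarrow> nat \<Rightarrow> nat" where
  "n_G V E l Phi t = Max (insert 0 ((\<lambda>Y. card (hyp_set V E l Y)) ` {Y. length Y = t \<and> set Y \<subseteq> Phi}))"

definition trackable :: "'v set \<Rightarrow> ('v \<times> 'v) set \<Rightarrow> ('v \<Rightarrow> 'c) \<Rightarrow> 'c set \<Rightarrow> bool" where
  "trackable V E l Phi \<longleftrightarrow> (\<exists>k::nat. (\<lambda>t. real (n_G V E l Phi t)) \<in> O(\<lambda>t. real t ^ k))"

definition accessible :: "('v \<times> 'v) set \<Rightarrow> 'v \<Rightarrow> 'v \<Rightarrow> bool" where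
  "accessible E i j \<longleftrightarrow> (i, j) \<in> E\<^sup>*"

definition recurrent :: "('v \<times> 'v) set \<Rightarrow> 'v \<Rightarrow> bool" where
  "recurrent E i \<longleftrightarrow> (\<forall>j. accessible E i j \<longrightarrow> accessible E j i)"

definition transient :: "('v \<times> 'v) set \<Rightarrow> 'v \<Rightarrow> bool" where
  "transient E i \<longleftrightarrow> \<not> recurrent E i"

end

theory Submission
  imports Defs "HOL-Real_Asymp.Real_Asymp"
begin

text \<open>
  Suppose some node of the cycle \<open>\<pi>1\<close> were recurrent. It reaches \<open>a\<close> along \<open>\<pi>1\<close>, and \<open>a\<close>
  reaches \<open>b\<close> along \<open>\<pi>3\<close>, so recurrence yields a path \<open>c\<close> from \<open>b\<close> back to \<open>a\<close>. Then
  \<open>\<pi>1 \<pi>3 c\<close> and \<open>\<pi>3 \<pi>2 c\<close> are two closed walks at \<open>a\<close> with the same colour sequence which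
  differ at position \<open>T\<close> (node \<open>a\<close> versus node \<open>b\<close>). Concatenating \<open>m\<close> freely chosen
  copies of them gives \<open>2^m\<close> distinct walks of one colour sequence, so \<open>n_G\<close> grows
  exponentially, contradicting trackability.
\<close>

definition walk_fun :: "('v \<times> 'v) set \<Rightarrow> nat \<Rightarrow> (nat \<Rightarrow> 'v) \<Rightarrow> bool" where
  "walk_fun E n p \<longleftrightarrow> (\<forall>i<n. (p i, p (Suc i)) \<in> E)"

definition join_walk :: "nat \<Rightarrow> (nat \<Rightarrow> 'v) \<Rightarrow> (nat \<Rightarrow> 'v) \<Rightarrow> nat \<Rightarrow> 'v" where
  "join_walk n p q i = (if i \<le> n then p i else q (i - n))"

definition splice_walks :: "nat \<Rightarrow> (nat \<Rightarrow> 'v) \<Rightarrow> (nat \<Rightarrow> 'v) \<Rightarrow> nat set \<Rightarrow> nat \<Rightarrow> 'v" where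
  "splice_walks L p q S i = (if i div L \<in> S then p else q) (i mod L)"

lemma walk_fun_rtrancl:
  assumes "walk_fun E n p" "i \<le> j" "j \<le> n"
  shows "(p i, p j) \<in> E\<^sup>*"
  using assms(2,3)
proof (induction j)
  case (Suc j)
  show ?case
  proof (cases "i = Suc j")
    case False
    then have "(p i, p j) \<in> E\<^sup>*" using Suc by simp
    moreover have "(p j, p (Suc j)) \<in> E" using assms(1) Suc.prems unfolding walk_fun_def by simp
    ultimately show ?thesis by simp
  qed simp
qed simp

lemma rtrancl_imp_walk_fun:
  assumes "(x, y) \<in> E\<^sup>*"
  obtains n p where "walk_fun E n p" "p 0 = x" "p n = y"
  using assms unfolding rtrancl_power relpow_fun_conv walk_fun_def by blast

lemma walk_fun_join_walk:
  assumes "walk_fun E n p" "walk_fun E k q" "p n = q 0"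
  shows "walk_fun E (n + k) (join_walk n p q)"
  unfolding walk_fun_def
proof (intro allI impI)
  fix i assume "i < n + k"
  then consider "Suc i \<le> n" | "Suc i = Suc n" | "n < i" "i - n < k" by linarith
  then show "(join_walk n p q i, join_walk n p q (Suc i)) \<in> E"
  proof cases
    case 3
    then have "Suc i - n = Suc (i - n)" by simp
    then show ?thesis using 3 assms(2) unfolding join_walk_def walk_fun_def by simp
  qed (use assms \<open>i < n + k\<close> in \<open>auto simp: join_walk_def walk_fun_def\<close>)
qed

lemma walk_fun_splice_walks:
  assumes "walk_fun E L p" "walk_fun E L q" "p 0 = a" "p L = a" "q 0 = a" "q L = a" "L > 0"
  shows "(splice_walks L p q S i, splice_walks L p q S (Suc i)) \<in> E"
proof (cases "Suc (i mod L) < L")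
  case True
  then have "Suc i div L = i div L" "Suc i mod L = Suc (i mod L)"
    by (simp_all add: div_Suc mod_Suc)
  then show ?thesis using True assms(1,2) unfolding splice_walks_def walk_fun_def by auto
next
  case False
  with assms(7) have last: "Suc (i mod L) = L" using mod_less_divisor[of L i] by linarith
  then have "Suc i mod L = 0" by (simp add: mod_Suc)
  then have "splice_walks L p q S (Suc i) = a" using assms(3,5) unfolding splice_walks_def by simp
  moreover have "(p (i mod L), p L) \<in> E" "(q (i mod L), q L) \<in> E"
    using assms(1,2) last unfolding walk_fun_def by (metis lessI)+
  ultimately show ?thesis using assms(4,6) unfolding splice_walks_def by simp
qed

lemma splice_walks_block:
  assumes "j < L"
  shows "splice_walks L p q S (r * L + j) = (if r \<in> S then p j else q j)"
  using assms unfolding splice_walks_def by simp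

lemma finite_hyp_set:
  assumes "weak_model V E l Phi"
  shows "finite (hyp_set V E l Y)"
proof (rule finite_subset)
  show "hyp_set V E l Y \<subseteq> {xs. set xs \<subseteq> V \<and> length xs = length Y}"
    unfolding hyp_set_def is_walk_def by auto
  show "finite {xs. set xs \<subseteq> V \<and> length xs = length Y}"
    using assms unfolding weak_model_def by (intro finite_lists_length_eq) auto
qed

lemma card_hyp_set_le_n_G:
  assumes "weak_model V E l Phi" "set Y \<subseteq> Phi"
  shows "card (hyp_set V E l Y) \<le> n_G V E l Phi (length Y)"
proof -
  have "finite {Y'. length Y' = length Y \<and> set Y' \<subseteq> Phi}"
    using assms(1) finite_lists_length_eq[of Phi "length Y"]
    unfolding weak_model_def by (simp add: conj_commute)
  then show ?thesis unfolding n_G_def using assms(2) by (intro Max_ge) auto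
qed

lemma n_G_exponential_lower_bound:
  assumes model: "weak_model V E l Phi"
    and walks: "walk_fun E L p" "walk_fun E L q"
    and closed: "p 0 = a" "p L = a" "q 0 = a" "q L = a"
    and colours: "\<forall>i<L. l (p i) = l (q i)"
    and differ: "j < L" "p j \<noteq> q j"
  shows "2 ^ m \<le> n_G V E l Phi (m * L)"
proof -
  have L: "L > 0" using differ(1) by simp
  let ?w = "splice_walks L p q"
  define Y where "Y = map (\<lambda>i. l (p (i mod L))) [0..<m * L]"
  define g where "g S = map (?w S) [0..<m * L]" for S
  have edge: "(?w S i, ?w S (Suc i)) \<in> E" for S i
    by (rule walk_fun_splice_walks[OF walks closed L])
  have in_V: "?w S i \<in> V" for S i
    using edge[of S i] model unfolding weak_model_def by auto
  have colour: "l (?w S i) = l (p (i mod L))" for S i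
    using colours L unfolding splice_walks_def by simp
  have g_hyp: "g ` Pow {..<m} \<subseteq> hyp_set V E l Y"
  proof
    fix xs assume "xs \<in> g ` Pow {..<m}"
    then obtain S where xs: "xs = g S" by blast
    have "is_walk V E xs" unfolding is_walk_def xs g_def using in_V edge by auto
    moreover have "map l xs = Y" unfolding xs g_def Y_def using colour by simp
    ultimately show "xs \<in> hyp_set V E l Y" unfolding hyp_set_def xs g_def Y_def by simp
  qed
  have "inj_on g (Pow {..<m})"
  proof (rule inj_onI, rule ccontr)
    fix S S' assume S: "g S = g S'" "S \<in> Pow {..<m}" "S' \<in> Pow {..<m}" "S \<noteq> S'"
    then obtain r where r: "r < m" "(r \<in> S) \<noteq> (r \<in> S')" by blast
    have "Suc r * L \<le> m * L" using r(1) by (intro mult_le_mono1) simp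
    then have "r * L + j < m * L" using differ(1) by simp
    then have "g S ! (r * L + j) = ?w S (r * L + j)" "g S' ! (r * L + j) = ?w S' (r * L + j)"
      unfolding g_def by simp_all
    then have "?w S (r * L + j) = ?w S' (r * L + j)" using S(1) by simp
    then show False using r(2) differ(2) by (auto simp: splice_walks_block[OF differ(1)])
  qed
  then have "card (Pow {..<m}) \<le> card (hyp_set V E l Y)"
    using card_inj_on_le g_hyp finite_hyp_set[OF model] by blast
  also have "\<dots> \<le> n_G V E l Phi (m * L)"
  proof -
    have "p (i mod L) \<in> V" for i using in_V[of UNIV i] unfolding splice_walks_def by simp
    then have "set Y \<subseteq> Phi" using model unfolding Y_def weak_model_def by auto
    then show ?thesis using card_hyp_set_le_n_G[OF model] unfolding Y_def by fastforce
  qed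
  finally show ?thesis by (simp add: card_Pow)
qed

lemma trackable_not_exponential:
  assumes "trackable V E l Phi" "L > 0"
  shows "\<exists>m. n_G V E l Phi (m * L) < 2 ^ m"
proof (rule ccontr)
  assume "\<not> ?thesis"
  then have lower: "2 ^ m \<le> n_G V E l Phi (m * L)" for m by (simp add: not_less)
  obtain k where "(\<lambda>t. real (n_G V E l Phi t)) \<in> O(\<lambda>t. real t ^ k)"
    using assms(1) unfolding trackable_def by blast
  then have "(\<lambda>m. real (n_G V E l Phi (m * L))) \<in> O(\<lambda>m. real (m * L) ^ k)"
    using landau_o.big.compose mult_nat_right_at_top assms(2) by blast
  moreover have "(\<lambda>m::nat. real (m * L) ^ k) \<in> o(\<lambda>m. 2 ^ m)"
    using assms(2) by (simp add: power_mult_distrib) real_asymp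
  moreover have "(\<lambda>m::nat. (2::real) ^ m) \<in> O(\<lambda>m. real (n_G V E l Phi (m * L)))"
  proof (rule landau_o.big_mono, intro always_eventually allI)
    fix m
    have "(2::real) ^ m \<le> real (n_G V E l Phi (m * L))"
      using lower[of m] by (metis of_nat_le_iff of_nat_numeral of_nat_power)
    then show "norm ((2::real) ^ m) \<le> norm (real (n_G V E l Phi (m * L)))" by simp
  qed
  ultimately have "(\<lambda>m::nat. (2::real) ^ m) \<in> o(\<lambda>m. 2 ^ m)"
    using landau_o.big_small_trans landau_o.big_trans by blast
  then show False by (simp add: landau_o.small_refl_iff)
qed

theorem corollary1:
  fixes V :: "'v set" and E :: "('v \<times> 'v) set" and l :: "'v \<Rightarrow> 'c" and Phi :: "'c set"
    and T :: nat and \<pi>1 \<pi>2 \<pi>3 :: "nat \<Rightarrow> 'v" and a b :: 'v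
  assumes "weak_model V E l Phi"
    and "trackable V E l Phi"
    and "T \<ge> 1"
    and "\<forall>i<T. (\<pi>1 i, \<pi>1 (Suc i)) \<in> E"
    and "\<forall>i<T. (\<pi>2 i, \<pi>2 (Suc i)) \<in> E"
    and "\<forall>i<T. (\<pi>3 i, \<pi>3 (Suc i)) \<in> E"
    and "\<forall>i\<le>T. l (\<pi>1 i) = l (\<pi>2 i) \<and> l (\<pi>2 i) = l (\<pi>3 i)"
    and "\<pi>1 0 = a" and "\<pi>1 T = a"
    and "\<pi>2 0 = b" and "\<pi>2 T = b" and "b \<noteq> a"
    and "\<pi>3 0 = a" and "\<pi>3 T = b"
  shows "\<forall>i\<le>T. transient E (\<pi>1 i)"
proof (rule ccontr)
  assume not_transient: "\<not> ?thesis"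
  have w: "walk_fun E T \<pi>1" "walk_fun E T \<pi>2" "walk_fun E T \<pi>3"
    using assms(4-6) unfolding walk_fun_def by blast+
  obtain i where "i \<le> T" "recurrent E (\<pi>1 i)"
    using not_transient unfolding transient_def by blast
  moreover have "(\<pi>1 i, a) \<in> E\<^sup>*" using walk_fun_rtrancl[OF w(1) \<open>i \<le> T\<close>] assms(9) by simp
  moreover have "(a, b) \<in> E\<^sup>*" using walk_fun_rtrancl[OF w(3), of 0 T] assms(13,14) by simp
  ultimately have "(b, a) \<in> E\<^sup>*" unfolding recurrent_def accessible_def by (meson rtrancl_trans)
  then obtain d c where c: "walk_fun E d c" "c 0 = b" "c d = a" by (rule rtrancl_imp_walk_fun)
  have "d > 0" using c(2,3) assms(12) by (cases d) auto
  define p where "p = join_walk T \<pi>1 (join_walk T \<pi>3 c)"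
  define q where "q = join_walk T \<pi>3 (join_walk T \<pi>2 c)"
  have "walk_fun E (T + (T + d)) p" "walk_fun E (T + (T + d)) q"
    unfolding p_def q_def using assms(9-11,13,14) c w
    by (auto intro!: walk_fun_join_walk simp: join_walk_def)
  moreover have "p 0 = a" "p (T + (T + d)) = a" "q 0 = a" "q (T + (T + d)) = a"
    unfolding p_def q_def join_walk_def using assms(3,8,13) c(3) \<open>d > 0\<close> by auto
  moreover have "\<forall>i<T + (T + d). l (p i) = l (q i)"
    unfolding p_def q_def join_walk_def using assms(7) by auto
  moreover have "T < T + (T + d)" "p T \<noteq> q T"
    unfolding p_def q_def join_walk_def using assms(3,9,12,14) by auto
  ultimately have "2 ^ m \<le> n_G V E l Phi (m * (T + (T + d)))" for m
    using n_G_exponential_lower_bound[OF assms(1)] by blast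
  moreover obtain m where "n_G V E l Phi (m * (T + (T + d))) < 2 ^ m"
    using trackable_not_exponential[OF assms(2), of "T + (T + d)"] \<open>d > 0\<close> by auto
  ultimately show False by (simp add: not_le [symmetric])
qed

end
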